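(* Let $R$ be a commutative unital $\mathbb C$-algebra, $c\in\mathbb C\setminus\{0\}$, and let $\partial$ be the unique $R$-linear derivation of the Laurent polynomial ring $R[\lambda,\lambda^{-1}]$ with $\partial\lambda=c$. Let $m\ge1$ and for $k=1,\dots,m$ define the operator \[ D_k=(-1)^{\frac{k(k+1)}2}\sum_{j=0}^{k-1}\frac{(k-1+j)!}{2^j(k-1-j)!\,j!}\,(-c)^j\,\lambda^{-(k+j)}\,\partial^{\,k-j} \] on $R[\lambda,\lambda^{-1}]$ (apply $\partial^{k-j}$, then multiply by $\lambda^{-(k+j)}$). Let $p=\sum_{j=0}^Na_j\lambda^j\in R[\lambda]$. Then $D_kp\in R[\lambda]$ for all $k=1,\dots,m$ if and only if $a_j=0$ for all odd $j$ with $1\le j\le 2m-1$. *)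

theory Defs
  imports Complex_Main "HOL-Computational_Algebra.Polynomial"
begin

text \<open>The commutative unital C-algebra R is a type 'a::comm_ring_1 together with a
unital ring homomorphism phi : complex => 'a (the structure map).
Laurent polynomials in R[lambda, lambda^-1] are represented by their coefficient
functions int => 'a (coefficient of lambda^n at n).\<close>

definition is_C_algebra_map :: "(complex \<Rightarrow> 'a::comm_ring_1) \<Rightarrow> bool" where
  "is_C_algebra_map \<phi> \<longleftrightarrow> \<phi> 1 = 1 \<and> (\<forall>x y. \<phi> (x + y) = \<phi> x + \<phi> y) \<and> (\<forall>x y. \<phi> (x * y) = \<phi> x * \<phi> y)"

text \<open>The unique R-linear derivation with d lambda = c: d(lambda^n) = n c lambda^(n-1).\<close>
definition lderiv :: "(complex \<Rightarrow> 'a::comm_ring_1) \<Rightarrow> complex \<Rightarrow> (int \<Rightarrow> 'a) \<Rightarrow> (int \<Rightarrow> 'a)" where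
  "lderiv \<phi> c f = (\<lambda>n. \<phi> c * of_int (n + 1) * f (n + 1))"

definition lmul_pow :: "int \<Rightarrow> (int \<Rightarrow> 'a::comm_ring_1) \<Rightarrow> (int \<Rightarrow> 'a)" where
  "lmul_pow s f = (\<lambda>n. f (n - s))"

definition Dcoef :: "complex \<Rightarrow> nat \<Rightarrow> nat \<Rightarrow> complex" where
  "Dcoef c k j = (-1) ^ (k * (k + 1) div 2)
      * (fact (k - 1 + j) / (2 ^ j * fact (k - 1 - j) * fact j)) * (- c) ^ j"

definition Dop :: "(complex \<Rightarrow> 'a::comm_ring_1) \<Rightarrow> complex \<Rightarrow> nat \<Rightarrow> (int \<Rightarrow> 'a) \<Rightarrow> (int \<Rightarrow> 'a)" where
  "Dop \<phi> c k f = (\<lambda>n. \<Sum>j<k. \<phi> (Dcoef c k j)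
        * lmul_pow (- int (k + j)) ((lderiv \<phi> c ^^ (k - j)) f) n)"

definition poly_to_laurent :: "'a::comm_ring_1 poly \<Rightarrow> (int \<Rightarrow> 'a)" where
  "poly_to_laurent p = (\<lambda>n. if n \<ge> 0 then coeff p (nat n) else 0)"

definition laurent_is_poly :: "(int \<Rightarrow> 'a::comm_ring_1) \<Rightarrow> bool" where
  "laurent_is_poly f \<longleftrightarrow> (\<forall>n<0. f n = 0)"

end

theory Submission
  imports Defs
begin

(* Every D_k acts diagonally on monomials up to a shift by 2k:
   the coefficient of lambda^n in D_k f equals phi(z_k(n)) times the coefficient of
   lambda^(n+2k) in f, where (Dop_factor below)
       z_k(n) = (-1)^(k(k+1)/2) c^k (N)(N-2)(N-4)...(N-2k+2),     N = n + 2k.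
   This rests on the identity  sum_{j<k} b_k(j) x(x-1)...(x-k+j+1) = x(x-2)...(x-2k+2)
   for the signed Bessel coefficients b_k(j) = (-1)^j (k-1+j)!/(2^j (k-1-j)! j!),
   proved by induction on k from the recurrence  b_{k+1}(i+1) = b_k(i+1) - (k+i) b_k(i).
   Since c is nonzero and the structure map phi is a homomorphism out of a field,
   phi(z) a = 0 forces a = 0 whenever z is nonzero, so a negative-degree coefficient of
   D_k p vanishes exactly when N = n + 2k is even or coeff p N = 0.  Hence D_k p is a
   polynomial iff the odd coefficients of p below degree 2k vanish, and taking all
   k = 1..m gives the theorem. *)

text \<open>The signed coefficients of the reverse Bessel polynomials; up to the factor
  \<open>(-1)^(k(k+1)/2) c^j\<close> they are the coefficients of the operator \<open>D_k\<close>.\<close>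

definition bessel_coeff :: "nat \<Rightarrow> nat \<Rightarrow> complex" where
  "bessel_coeff k j =
     (if j < k then (-1)^j * fact (k-1+j) / (2^j * fact (k-1-j) * fact j) else 0)"

text \<open>Denominators produced by \<open>fact (Suc n)\<close> never vanish.\<close>

lemma one_plus_of_nat_neq_0 [simp]: "(1 + of_nat n :: complex) \<noteq> 0"
  by (metis of_nat_Suc of_nat_neq_0)

text \<open>Ratio of consecutive coefficients in the index \<open>j\<close> (both sides vanish for \<open>j = k - 1\<close>).\<close>

lemma bessel_coeff_shift_index:
  assumes "j < k"
  shows "of_nat (Suc j) * bessel_coeff k (Suc j)
           = - of_nat (k+j) * of_nat (k-1-j) / 2 * bessel_coeff k j"
proof (cases "Suc j = k")
  case True
  then show ?thesis by (simp add: bessel_coeff_def)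
next
  case False
  then have "Suc j < k" using assms by simp
  then obtain r where k: "k = Suc (Suc j + r)" using less_imp_Suc_add by blast
  have ratio: "of_nat (Suc j) * ((-1)^Suc j * fact (Suc a) / (2^Suc j * fact r * fact (Suc j)))
     = - of_nat (Suc a) * of_nat (Suc r) / 2 * ((-1)^j * fact a / (2^j * fact (Suc r) * fact j) :: complex)"
    for a :: nat
    by (simp add: divide_simps) (simp add: algebra_simps)
  have "Suc j < k" "j < k" "k - 1 + Suc j = Suc (k - 1 + j)" "k + j = Suc (k - 1 + j)"
      "k - 1 - Suc j = r" "k - 1 - j = Suc r"
    using k by simp_all
  then show ?thesis
    by (simp only: bessel_coeff_def if_True ratio)
qed

lemma bessel_coeff_shift_order:
  assumes "j < k"
  shows "of_nat (k-j) * bessel_coeff (Suc k) j = of_nat (k+j) * bessel_coeff k j"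
proof -
  obtain r where k: "k = Suc (j + r)" using less_imp_Suc_add[OF assms] by blast
  have ratio: "of_nat (Suc r) * ((-1)^j * fact (Suc a) / (2^j * fact (Suc r) * fact j))
     = of_nat (Suc a) * ((-1)^j * fact a / (2^j * fact r * fact j) :: complex)" for a :: nat
    by (simp add: divide_simps)
  have "j < Suc k" "j < k" "Suc k - 1 + j = Suc (k - 1 + j)" "k + j = Suc (k - 1 + j)"
      "Suc k - 1 - j = Suc r" "k - 1 - j = r" "k - j = Suc r"
    using k by simp_all
  then show ?thesis
    by (simp only: bessel_coeff_def if_True ratio)
qed

lemma bessel_coeff_rec:
  assumes "i < k"
  shows "bessel_coeff (Suc k) (Suc i) = bessel_coeff k (Suc i) - of_nat (k+i) * bessel_coeff k i"
proof -
  define b where "b = bessel_coeff k i"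
  define s d :: complex where "s = of_nat (Suc i)" and "d = of_nat (k-i)"
  have s_nz: "s \<noteq> 0" and d_nz: "d \<noteq> 0" using assms unfolding s_def d_def by simp_all
  have up: "s * bessel_coeff (Suc k) (Suc i) = - of_nat (Suc k + i) * d / 2 * bessel_coeff (Suc k) i"
    using bessel_coeff_shift_index[of i "Suc k"] assms unfolding s_def d_def by simp
  have left: "d * bessel_coeff (Suc k) i = of_nat (k+i) * b"
    unfolding b_def d_def using bessel_coeff_shift_order[OF assms] .
  have right: "s * bessel_coeff k (Suc i) = - of_nat (k+i) * of_nat (k-1-i) / 2 * b"
    unfolding b_def s_def using bessel_coeff_shift_index[OF assms] .
  have sum: "of_nat (k-1-i) + 2 * s = (of_nat (Suc k + i) :: complex)"
    using assms unfolding s_def by (simp add: of_nat_diff)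
  have "s * d * bessel_coeff (Suc k) (Suc i) = d * (s * bessel_coeff (Suc k) (Suc i))"
    by (simp only: mult_ac)
  also have "\<dots> = - of_nat (Suc k + i) * d / 2 * (d * bessel_coeff (Suc k) i)"
    unfolding up by (simp only: mult_ac times_divide_eq_left)
  also have "\<dots> = - (of_nat (k-1-i) + 2 * s) * d / 2 * (of_nat (k+i) * b)"
    unfolding left sum ..
  also have "\<dots> = d * (s * bessel_coeff k (Suc i)) - s * d * (of_nat (k+i) * b)"
    unfolding right by (simp add: field_simps)
  also have "\<dots> = s * d * (bessel_coeff k (Suc i) - of_nat (k+i) * b)"
    by (simp add: algebra_simps)
  finally show ?thesis
    using s_nz d_nz unfolding b_def by (metis mult_cancel_left mult_eq_0_iff)
qed

definition falling :: "nat \<Rightarrow> complex \<Rightarrow> complex" where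
  "falling m x = (\<Prod>s<m. x - of_nat s)"

lemma falling_Suc: "falling (Suc m) x = falling m x * (x - of_nat m)"
  by (simp add: falling_def)

lemma falling_upwards: "falling m x = (\<Prod>t<m. x - of_nat m + 1 + of_nat t)"
  unfolding falling_def prod.nat_diff_reindex[symmetric, where g = "\<lambda>s. x - of_nat s"]
  by (rule prod.cong) (auto simp: of_nat_diff)

lemma bessel_falling_identity:
  assumes "k \<ge> 1"
  shows "(\<Sum>j<k. bessel_coeff k j * falling (k-j) x) = (\<Prod>i<k. x - 2 * of_nat i)"
  using assms
proof (induction k rule: dec_induct)
  case base
  then show ?case by (simp add: bessel_coeff_def falling_def)
next
  case (step k)
  have first: "bessel_coeff k 0 = 1" "bessel_coeff (Suc k) 0 = 1" and last: "bessel_coeff k k = 0"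
    using step by (simp_all add: bessel_coeff_def)
  text \<open>Multiplying by \<open>x - 2k = (x - (k - j)) - (k + j)\<close> raises the falling factorial.\<close>
  have raise: "falling (k-j) x * (x - 2 * of_nat k)
      = falling (Suc (k-j)) x - of_nat (k+j) * falling (k-j) x" if "j < k" for j
    using that by (simp add: falling_Suc of_nat_diff algebra_simps)
  have shifted: "(\<Sum>j<k. bessel_coeff k j * falling (Suc (k-j)) x)
      = falling (Suc k) x + (\<Sum>i<k. bessel_coeff k (Suc i) * falling (k-i) x)"
  proof -
    have "(\<Sum>j<k. bessel_coeff k j * falling (Suc (k-j)) x)
        = (\<Sum>j<Suc k. bessel_coeff k j * falling (Suc (k-j)) x)"
      by (simp add: last)
    also have "\<dots> = falling (Suc k) x + (\<Sum>i<k. bessel_coeff k (Suc i) * falling (k-i) x)"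
      unfolding sum.lessThan_Suc_shift by (simp add: first Suc_diff_Suc)
    finally show ?thesis .
  qed
  have expand: "(\<Sum>j<k. bessel_coeff k j * (falling (k-j) x * (x - 2 * of_nat k)))
      = (\<Sum>j<k. bessel_coeff k j * falling (Suc (k-j)) x)
        - (\<Sum>j<k. of_nat (k+j) * bessel_coeff k j * falling (k-j) x)"
    unfolding sum_subtractf[symmetric]
  proof (rule sum.cong)
    fix j assume "j \<in> {..<k}"
    then have "j < k" by simp
    show "bessel_coeff k j * (falling (k-j) x * (x - 2 * of_nat k))
        = bessel_coeff k j * falling (Suc (k-j)) x - of_nat (k+j) * bessel_coeff k j * falling (k-j) x"
      unfolding raise[OF \<open>j < k\<close>] by (simp add: algebra_simps)
  qed simp
  have "(\<Sum>j<Suc k. bessel_coeff (Suc k) j * falling (Suc k - j) x)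
      = falling (Suc k) x
        + (\<Sum>i<k. (bessel_coeff k (Suc i) - of_nat (k+i) * bessel_coeff k i) * falling (k-i) x)"
    unfolding sum.lessThan_Suc_shift by (simp add: first bessel_coeff_rec)
  also have "\<dots> = (\<Sum>j<k. bessel_coeff k j * (falling (k-j) x * (x - 2 * of_nat k)))"
    unfolding expand shifted by (simp add: left_diff_distrib sum_subtractf mult.assoc)
  also have "\<dots> = (\<Prod>i<Suc k. x - 2 * of_nat i)"
    by (simp add: step.IH[symmetric] sum_distrib_right mult.assoc)
  finally show ?case .
qed

lemma Dcoef_times_power:
  assumes "j < k"
  shows "Dcoef c k j * c^(k-j) = (-1)^(k*(k+1) div 2) * c^k * bessel_coeff k j"
proof -
  have "(-c)^j * c^(k-j) = (-1)^j * c^k"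
    using assms by (simp add: power_minus[of c j] mult.assoc power_add[symmetric])
  then show ?thesis
    using assms unfolding Dcoef_def bessel_coeff_def
    by (simp add: algebra_simps)
qed

text \<open>The scalar by which \<open>D_k\<close> multiplies the coefficient shifted from degree \<open>n + 2k\<close>
  to degree \<open>n\<close>.\<close>

definition Dop_factor :: "complex \<Rightarrow> nat \<Rightarrow> int \<Rightarrow> complex" where
  "Dop_factor c k n =
     (-1)^(k*(k+1) div 2) * c^k * (\<Prod>i<k. of_int (n + 2 * int k) - 2 * of_nat i)"

lemma Dop_factor_eq_0_iff:
  assumes "c \<noteq> 0"
  shows "Dop_factor c k n = 0 \<longleftrightarrow> (\<exists>i<k. n + 2 * int k = 2 * int i)"
proof -
  have factor_eq_0: "(of_int n + 2 * of_nat k = (2 * of_nat i :: complex))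
      \<longleftrightarrow> n + 2 * int k = 2 * int i" for i
  proof -
    have "(of_int n + 2 * of_nat k :: complex) = of_int (n + 2 * int k)"
      and "(2 * of_nat i :: complex) = of_int (2 * int i)"
      by simp_all
    then show ?thesis by (simp only: of_int_eq_iff)
  qed
  show ?thesis
    using assms unfolding Dop_factor_def by (auto simp: prod_zero_iff factor_eq_0)
qed

locale C_algebra =
  fixes \<phi> :: "complex \<Rightarrow> 'a::comm_ring_1"
  assumes structure_map: "is_C_algebra_map \<phi>"
begin

lemma phi_1: "\<phi> 1 = 1"
  and phi_add: "\<phi> (x + y) = \<phi> x + \<phi> y"
  and phi_mult: "\<phi> (x * y) = \<phi> x * \<phi> y"
  using structure_map unfolding is_C_algebra_map_def by auto

lemma phi_0: "\<phi> 0 = 0"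
  using phi_add[of 0 0] by simp

lemma phi_uminus: "\<phi> (- x) = - \<phi> x"
  using phi_add[of x "-x"] phi_0 by (simp add: eq_neg_iff_add_eq_0 add.commute)

lemma phi_of_int: "\<phi> (of_int z) = of_int z"
proof -
  have "\<phi> (of_nat n) = of_nat n" for n
    by (induction n) (simp_all add: phi_0 phi_add phi_1 add.commute)
  then show ?thesis
    by (cases z rule: int_cases) (simp_all add: phi_uminus del: of_nat_Suc)
qed

lemma phi_power: "\<phi> (x ^ n) = \<phi> x ^ n"
  by (induction n) (simp_all add: phi_1 phi_mult)

lemma phi_sum: "\<phi> (\<Sum>j<(k::nat). f j) = (\<Sum>j<k. \<phi> (f j))"
  by (induction k) (simp_all add: phi_0 phi_add)

lemma phi_prod: "\<phi> (\<Prod>j<(k::nat). f j) = (\<Prod>j<k. \<phi> (f j))"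
  by (induction k) (simp_all add: phi_1 phi_mult)

text \<open>Scalars from \<open>\<complex>\<close> act without torsion: a nonzero scalar is invertible.\<close>

lemma phi_cancel:
  assumes "z \<noteq> 0" and "\<phi> z * a = 0"
  shows "a = 0"
proof -
  have "a = \<phi> (inverse z) * (\<phi> z * a)"
    using assms(1) by (simp add: mult.assoc[symmetric] phi_mult[symmetric] phi_1)
  then show ?thesis using assms(2) by simp
qed

lemma lderiv_power:
  "(lderiv \<phi> c ^^ i) f = (\<lambda>n. \<phi> c ^ i * (\<Prod>t<i. of_int (n + 1 + int t)) * f (n + int i))"
proof (induction i arbitrary: f)
  case 0
  then show ?case by simp
next
  case (Suc i)
  show ?case
    unfolding funpow_Suc_right comp_def Suc.IH[of "lderiv \<phi> c f"]
    by (rule ext) (simp add: lderiv_def algebra_simps)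
qed

lemma Dop_coefficient:
  assumes "k \<ge> 1"
  shows "Dop \<phi> c k f n = \<phi> (Dop_factor c k n) * f (n + 2 * int k)"
proof -
  define x :: complex where "x = of_int (n + 2 * int k)"
  have summand: "\<phi> (Dcoef c k j) * lmul_pow (- int (k + j)) ((lderiv \<phi> c ^^ (k - j)) f) n
      = \<phi> ((-1)^(k*(k+1) div 2) * c^k * (bessel_coeff k j * falling (k-j) x)) * f (n + 2 * int k)"
    if "j < k" for j
  proof -
    have prod: "(\<Prod>t<k-j. of_int (n + int (k+j) + 1 + int t)) = \<phi> (falling (k-j) x)"
      unfolding falling_upwards phi_prod
    proof (rule prod.cong)
      fix t
      have factor: "x - of_nat (k-j) + 1 + of_nat t = of_int (n + int (k+j) + 1 + int t)"
        using that unfolding x_def by (simp add: of_nat_diff)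
      show "of_int (n + int (k+j) + 1 + int t) = \<phi> (x - of_nat (k-j) + 1 + of_nat t)"
        unfolding factor phi_of_int ..
    qed simp
    have "\<phi> (Dcoef c k j) * (\<phi> c ^ (k-j) * \<phi> (falling (k-j) x))
        = \<phi> (Dcoef c k j * c^(k-j) * falling (k-j) x)"
      by (simp only: phi_mult phi_power mult.assoc)
    also have "\<dots> = \<phi> ((-1)^(k*(k+1) div 2) * c^k * (bessel_coeff k j * falling (k-j) x))"
      unfolding Dcoef_times_power[OF that] by (simp only: mult.assoc)
    finally have scalar: "\<phi> (Dcoef c k j) * (\<phi> c ^ (k-j) * \<phi> (falling (k-j) x))
        = \<phi> ((-1)^(k*(k+1) div 2) * c^k * (bessel_coeff k j * falling (k-j) x))" .
    have shift: "n - - int (k + j) = n + int (k + j)" "n + int (k + j) + int (k - j) = n + 2 * int k"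
      using that by simp_all
    show ?thesis
      unfolding lmul_pow_def lderiv_power shift prod scalar[symmetric] by (simp only: mult.assoc)
  qed
  have "Dop \<phi> c k f n
      = (\<Sum>j<k. \<phi> ((-1)^(k*(k+1) div 2) * c^k * (bessel_coeff k j * falling (k-j) x))
          * f (n + 2 * int k))"
    unfolding Dop_def by (intro sum.cong refl summand) simp
  also have "\<dots> = \<phi> ((-1)^(k*(k+1) div 2) * c^k * (\<Sum>j<k. bessel_coeff k j * falling (k-j) x))
        * f (n + 2 * int k)"
    unfolding sum_distrib_left phi_sum sum_distrib_right ..
  finally show ?thesis
    unfolding bessel_falling_identity[OF assms] Dop_factor_def x_def .
qed

lemma Dop_polynomial_iff:
  assumes "c \<noteq> 0" and "k \<ge> 1"
  shows "laurent_is_poly (Dop \<phi> c k (poly_to_laurent p))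
           \<longleftrightarrow> (\<forall>N. odd N \<and> N < 2 * k \<longrightarrow> coeff p N = 0)"
proof
  assume poly: "laurent_is_poly (Dop \<phi> c k (poly_to_laurent p))"
  show "\<forall>N. odd N \<and> N < 2 * k \<longrightarrow> coeff p N = 0"
  proof (intro allI impI)
    fix N assume N: "odd N \<and> N < 2 * k"
    define n where "n = int N - 2 * int k"
    have "\<phi> (Dop_factor c k n) * coeff p N = 0"
      using poly N Dop_coefficient[OF assms(2), of c "poly_to_laurent p" n]
      unfolding laurent_is_poly_def n_def poly_to_laurent_def by simp
    moreover have "Dop_factor c k n \<noteq> 0"
      using N unfolding Dop_factor_eq_0_iff[OF assms(1)] n_def by presburger
    ultimately show "coeff p N = 0"
      using phi_cancel by blast
  qed
next
  assume odd_zero: "\<forall>N. odd N \<and> N < 2 * k \<longrightarrow> coeff p N = 0"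
  show "laurent_is_poly (Dop \<phi> c k (poly_to_laurent p))"
    unfolding laurent_is_poly_def
  proof (intro allI impI)
    fix n :: int assume "n < 0"
    show "Dop \<phi> c k (poly_to_laurent p) n = 0"
    proof (cases "n + 2 * int k < 0")
      case True
      then show ?thesis
        unfolding Dop_coefficient[OF assms(2)] by (simp add: poly_to_laurent_def)
    next
      case False
      define N where "N = nat (n + 2 * int k)"
      have N: "n + 2 * int k = int N" "N < 2 * k"
        using False \<open>n < 0\<close> unfolding N_def by linarith+
      show ?thesis
      proof (cases "odd N")
        case True
        then show ?thesis
          using odd_zero N unfolding Dop_coefficient[OF assms(2)] by (simp add: poly_to_laurent_def)
      next
        case False
        then obtain i where "N = 2 * i" by (auto elim: evenE)
        then have "Dop_factor c k n = 0"
          using N Dop_factor_eq_0_iff[OF assms(1)] by auto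
        then show ?thesis
          unfolding Dop_coefficient[OF assms(2)] by (simp add: phi_0)
      qed
    qed
  qed
qed

end

theorem mainTheorem9:
  fixes \<phi> :: "complex \<Rightarrow> 'a::comm_ring_1" and c :: complex and m :: nat and p :: "'a poly"
  assumes "is_C_algebra_map \<phi>" and "c \<noteq> 0" and "m \<ge> 1"
  shows "(\<forall>k\<in>{1..m}. laurent_is_poly (Dop \<phi> c k (poly_to_laurent p)))
     \<longleftrightarrow> (\<forall>j. odd j \<and> 1 \<le> j \<and> j \<le> 2 * m - 1 \<longrightarrow> coeff p j = 0)"
proof -
  interpret C_algebra \<phi> by (rule C_algebra.intro) (rule assms(1))
  have "(\<forall>k\<in>{1..m}. laurent_is_poly (Dop \<phi> c k (poly_to_laurent p)))
      \<longleftrightarrow> (\<forall>k\<in>{1..m}. \<forall>N. odd N \<and> N < 2 * k \<longrightarrow> coeff p N = 0)"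
    using Dop_polynomial_iff[OF assms(2)] by simp
  also have "\<dots> \<longleftrightarrow> (\<forall>j. odd j \<and> 1 \<le> j \<and> j \<le> 2 * m - 1 \<longrightarrow> coeff p j = 0)"
  proof (intro iffI allI impI ballI)
    fix j assume all: "\<forall>k\<in>{1..m}. \<forall>N. odd N \<and> N < 2 * k \<longrightarrow> coeff p N = 0"
      and j: "odd j \<and> 1 \<le> j \<and> j \<le> 2 * m - 1"
    have "m \<in> {1..m}" "j < 2 * m"
      using assms(3) j by auto
    then show "coeff p j = 0"
      using all j by blast
  next
    fix k N assume "\<forall>j. odd j \<and> 1 \<le> j \<and> j \<le> 2 * m - 1 \<longrightarrow> coeff p j = 0"
      and "k \<in> {1..m}" and "odd N \<and> N < 2 * k"
    then show "coeff p N = 0"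
      by (auto simp: odd_pos Suc_le_eq)
  qed
  finally show ?thesis .
qed

end
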